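(* Let $A\in P(n)$ have rank one. Then for every unitarily invariant norm $N$ on $M_n$, $$I(N,A)=\min_{1\le i\le n}A_{ii}.$$
   Context: $M_n$ is the set of complex $n\times n$ matrices, $P(n)$ the positive semidefinite ones, $\circ$ the Hadamard product. $I(N,A)=\min\{N(A\circ B): B\in P(n),\ N(B)=1\}$. *)

theory Defs
  imports "HOL-Analysis.Analysis"
begin

definition adjoint_mat :: "complex^'n^'n \<Rightarrow> complex^'n^'n" where
  "adjoint_mat A = (\<chi> i j. cnj (A $ j $ i))"

definition unitary_mat :: "complex^'n^'n \<Rightarrow> bool" where
  "unitary_mat U \<longleftrightarrow> U ** adjoint_mat U = mat 1 \<and> adjoint_mat U ** U = mat 1"

definition hadamard :: "complex^'n^'n \<Rightarrow> complex^'n^'n \<Rightarrow> complex^'n^'n" (infixl "\<circ>\<^sub>H" 70) where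
  "A \<circ>\<^sub>H B = (\<chi> i j. A $ i $ j * B $ i $ j)"

definition psd :: "complex^'n^'n \<Rightarrow> bool" where
  "psd A \<longleftrightarrow> adjoint_mat A = A \<and>
     (\<forall>x::complex^'n. 0 \<le> Re (\<Sum>i\<in>UNIV. \<Sum>j\<in>UNIV. cnj (x $ i) * A $ i $ j * x $ j))"

definition is_matrix_norm :: "(complex^'n^'n \<Rightarrow> real) \<Rightarrow> bool" where
  "is_matrix_norm N \<longleftrightarrow>
     (\<forall>X. 0 \<le> N X) \<and> (\<forall>X. N X = 0 \<longleftrightarrow> X = 0) \<and>
     (\<forall>c X. N (c *\<^sub>R X) = \<bar>c\<bar> * N X) \<and>
     (\<forall>(c::complex) X. N (\<chi> i j. c * X $ i $ j) = cmod c * N X) \<and>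
     (\<forall>X Y. N (X + Y) \<le> N X + N Y)"

definition unitarily_invariant_norm :: "(complex^'n^'n \<Rightarrow> real) \<Rightarrow> bool" where
  "unitarily_invariant_norm N \<longleftrightarrow> is_matrix_norm N \<and>
     (\<forall>U V X. unitary_mat U \<longrightarrow> unitary_mat V \<longrightarrow> N (U ** X ** V) = N X)"

text \<open>I(N,A) = min { N(A o B) : B psd, N(B) = 1 }; rendered as an infimum, attainment
  is stated separately in the theorem.\<close>
definition I_idx :: "(complex^'n^'n \<Rightarrow> real) \<Rightarrow> complex^'n^'n \<Rightarrow> real" where
  "I_idx N A = Inf {N (A \<circ>\<^sub>H B) | B. psd B \<and> N B = 1}"

end

theory Submission
  imports Defs
begin

(* A rank-one psd matrix is an outer product x x^*, so A o B = D B D^* with D = diag x.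
   Conjugating by a diagonal matrix diag c with all |c_i| <= 1 cannot increase a unitarily
   invariant norm: each c_i is the mean of two unimodular numbers, so the conjugate is an average
   of four diagonal-unitary conjugates of the matrix. With c_i = sqrt mu / x_i, where
   mu = min |x_i|^2 = min A_ii, this turns A o B into mu B, whence N (A o B) >= mu N B.
   The bound is attained at a normalised matrix unit E_kk for an index k where A_kk = mu. *)

definition diag_mat :: "('n \<Rightarrow> complex) \<Rightarrow> complex^'n^'n" where
  "diag_mat u = (\<chi> i j. if i = j then u i else 0)"

definition diag_scale ::
    "('n \<Rightarrow> complex) \<Rightarrow> ('n \<Rightarrow> complex) \<Rightarrow> complex^'n^'n \<Rightarrow> complex^'n^'n" where
  "diag_scale u w X = (\<chi> i j. u i * X$i$j * w j)"

lemma diag_mat_mult: "diag_mat u ** X = (\<chi> i j. u i * X$i$j)"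
  by (simp add: matrix_matrix_mult_def diag_mat_def vec_eq_iff if_distrib[of "\<lambda>x. x * _"] cong: if_cong)

lemma mult_diag_mat: "X ** diag_mat u = (\<chi> i j. X$i$j * u j)"
  by (simp add: matrix_matrix_mult_def diag_mat_def vec_eq_iff if_distrib[of "\<lambda>x. _ * x"] cong: if_cong)

lemma diag_mat_mult_diag_mat: "diag_mat u ** diag_mat w = diag_mat (\<lambda>i. u i * w i)"
  unfolding diag_mat_mult by (simp add: diag_mat_def vec_eq_iff)

lemma diag_mat_sandwich: "diag_mat u ** X ** diag_mat w = diag_scale u w X"
  by (simp add: diag_mat_mult mult_diag_mat diag_scale_def)

lemma adjoint_diag_mat: "adjoint_mat (diag_mat u) = diag_mat (\<lambda>i. cnj (u i))"
  by (auto simp: adjoint_mat_def diag_mat_def vec_eq_iff)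

lemma diag_mat_1: "diag_mat (\<lambda>_. 1) = mat 1"
  by (simp add: diag_mat_def mat_def)

lemma scaleR_diag_mat: "t *\<^sub>R diag_mat u = diag_mat (\<lambda>i. t *\<^sub>R u i)"
  by (simp add: diag_mat_def vec_eq_iff)

lemma unitary_diag_mat:
  assumes "\<And>i. cmod (u i) = 1"
  shows "unitary_mat (diag_mat u)"
proof -
  have "u i * cnj (u i) = 1" "cnj (u i) * u i = 1" for i
    using assms[of i] complex_norm_square[of "u i"] by (simp_all add: mult.commute)
  then show ?thesis
    by (simp add: unitary_mat_def adjoint_diag_mat diag_mat_mult_diag_mat diag_mat_1)
qed

lemma psd_hermitian:
  assumes "psd A"
  shows "cnj (A$j$i) = A$i$j"
proof -
  have "adjoint_mat A $ i $ j = A $ i $ j"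
    using assms unfolding psd_def by simp
  then show ?thesis
    by (simp add: adjoint_mat_def)
qed

lemma psd_diag_real: "psd A \<Longrightarrow> A$k$k = complex_of_real (Re (A$k$k))"
  using psd_hermitian[of A k k] by (simp add: complex_eq_iff)

lemma psd_diag_nonneg:
  assumes "psd A"
  shows "0 \<le> Re (A$k$k)"
proof -
  have "0 \<le> Re (\<Sum>i\<in>UNIV. \<Sum>j\<in>UNIV. cnj (axis k 1 $ i) * A$i$j * axis k (1::complex) $ j)"
    using assms unfolding psd_def by blast
  moreover have "(\<Sum>i\<in>UNIV. \<Sum>j\<in>UNIV. cnj (axis k 1 $ i) * A$i$j * axis k (1::complex) $ j) = A$k$k"
    by (simp add: axis_def if_distrib[of cnj] if_distrib[of "\<lambda>x. x * _"] if_distrib[of "\<lambda>x. _ * x"]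
        cong: if_cong)
  ultimately show ?thesis
    by simp
qed

lemma psd_diag_mat:
  fixes d :: "'n::finite \<Rightarrow> real"
  assumes "\<And>i. 0 \<le> d i"
  shows "psd (diag_mat (\<lambda>i. complex_of_real (d i)))"
  unfolding psd_def
proof (intro conjI allI)
  show "adjoint_mat (diag_mat (\<lambda>i. complex_of_real (d i))) = diag_mat (\<lambda>i. complex_of_real (d i))"
    by (simp add: adjoint_diag_mat)
  fix y :: "complex^'n"
  have "(\<Sum>i\<in>UNIV. \<Sum>j\<in>UNIV. cnj (y$i) * diag_mat (\<lambda>i. complex_of_real (d i)) $ i $ j * y$j)
      = (\<Sum>i\<in>UNIV. complex_of_real (d i) * (cnj (y$i) * y$i))"
    by (simp add: diag_mat_def if_distrib[of "\<lambda>x. x * _"] if_distrib[of "\<lambda>x. _ * x"] mult_ac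
        cong: if_cong)
  moreover have "Re (complex_of_real (d i) * (cnj (y$i) * y$i)) = d i * (cmod (y$i))^2" for i
    by (simp flip: complex_norm_square add: mult.commute)
  ultimately show "0 \<le> Re (\<Sum>i\<in>UNIV. \<Sum>j\<in>UNIV.
      cnj (y$i) * diag_mat (\<lambda>i. complex_of_real (d i)) $ i $ j * y$j)"
    using assms by (simp add: sum_nonneg)
qed

lemma hadamard_diag_mat: "A \<circ>\<^sub>H diag_mat u = diag_mat (\<lambda>i. A$i$i * u i)"
  by (simp add: hadamard_def diag_mat_def vec_eq_iff)

lemma hadamard_outer:
  assumes "\<And>i j. A$i$j = x i * y j"
  shows "A \<circ>\<^sub>H B = diag_scale x y B"
  by (simp add: hadamard_def diag_scale_def assms vec_eq_iff mult_ac)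

lemma diag_scale_diag_scale:
  "diag_scale u w (diag_scale u' w' X) = diag_scale (\<lambda>i. u i * u' i) (\<lambda>j. w' j * w j) X"
  by (simp add: diag_scale_def mult_ac)

lemma is_matrix_normD:
  assumes "is_matrix_norm N"
  shows "0 \<le> N X" and "N X = 0 \<longleftrightarrow> X = 0" and "N (c *\<^sub>R X) = \<bar>c\<bar> * N X"
    and "N (X + Y) \<le> N X + N Y"
  using assms unfolding is_matrix_norm_def by auto

lemma unitarily_invariant_normD:
  assumes "unitarily_invariant_norm N"
  shows "is_matrix_norm N" and "unitary_mat U \<Longrightarrow> unitary_mat V \<Longrightarrow> N (U ** X ** V) = N X"
  using assms unfolding unitarily_invariant_norm_def by auto

lemma unitarily_invariant_norm_diag_scale_unimodular:
  assumes "unitarily_invariant_norm N" "\<And>i. cmod (u i) = 1" "\<And>j. cmod (w j) = 1"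
  shows "N (diag_scale u w X) = N X"
  using unitarily_invariant_normD(2)[OF assms(1) unitary_diag_mat unitary_diag_mat] assms(2,3)
  by (simp add: diag_mat_sandwich)

lemma complex_midpoint_cis:
  fixes c :: complex
  assumes "cmod c \<le> 1"
  shows "c = (cis (Arg c + arccos (cmod c)) + cis (Arg c - arccos (cmod c))) / 2"
proof -
  define t where "t = arccos (cmod c)"
  have "cos t = cmod c"
    using assms by (simp add: t_def cos_arccos_abs)
  then have "c = cis (Arg c) * ((cis t + cis (-t)) / 2)"
    using rcis_cmod_Arg[of c] by (simp add: rcis_def cis.ctr complex_eq_iff mult.commute)
  also have "\<dots> = (cis (Arg c + t) + cis (Arg c - t)) / 2"
    by (simp add: cis_mult algebra_simps)
  finally show ?thesis
    by (simp add: t_def)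
qed

lemma unitarily_invariant_norm_diag_scale_le:
  assumes N: "unitarily_invariant_norm N" and "\<And>i. cmod (c i) \<le> 1" "\<And>j. cmod (d j) \<le> 1"
  shows "N (diag_scale c d X) \<le> N X"
proof -
  define u where "u i = cis (Arg (c i) + arccos (cmod (c i)))" for i
  define v where "v i = cis (Arg (c i) - arccos (cmod (c i)))" for i
  define u' where "u' j = cis (Arg (d j) + arccos (cmod (d j)))" for j
  define v' where "v' j = cis (Arg (d j) - arccos (cmod (d j)))" for j
  have midpoints: "c i = (u i + v i) / 2" "d j = (u' j + v' j) / 2" for i j
    using complex_midpoint_cis assms(2,3) by (simp_all add: u_def v_def u'_def v'_def)
  have "diag_scale c d X = (1/4::real) *\<^sub>R
      (diag_scale u u' X + diag_scale u v' X + diag_scale v u' X + diag_scale v v' X)"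
    by (simp add: diag_scale_def vec_eq_iff midpoints) (simp add: scaleR_conv_of_real field_simps)
  moreover have "cmod (u i) = 1" "cmod (v i) = 1" "cmod (u' j) = 1" "cmod (v' j) = 1" for i j
    by (simp_all add: u_def v_def u'_def v'_def)
  then have "N (diag_scale u u' X + diag_scale u v' X + diag_scale v u' X + diag_scale v v' X)
      \<le> 4 * N X"
    using is_matrix_normD(4)[OF unitarily_invariant_normD(1)[OF N]]
      unitarily_invariant_norm_diag_scale_unimodular[OF N]
    by (smt (verit))
  ultimately show ?thesis
    using is_matrix_normD(3)[OF unitarily_invariant_normD(1)[OF N]] by simp
qed

lemma rank_le_1_factor:
  fixes A :: "'a::field^'n^'m"
  assumes "rank A \<le> 1"
  obtains a v where "\<And>i j. A$i$j = a i * v$j"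
proof -
  obtain B where B: "vec.independent B" "rows A \<subseteq> vec.span B" "card B = rank A"
    using vec.basis_exists[of "rows A"] unfolding row_rank_def_gen by metis
  have "\<forall>b\<in>B. \<forall>b'\<in>B. b = b'"
    using assms B(3) card_le_Suc0_iff_eq[OF vec.finiteI_independent[OF B(1)]] by simp
  then obtain v where "B \<subseteq> {v}"
    by (cases "B = {}") auto
  then have "row i A \<in> vec.span {v}" for i
    using B(2) vec.span_mono unfolding rows_def by blast
  then have "\<exists>c. row i A = c *s v" for i
    by (auto simp: vec.span_singleton)
  then obtain a where "\<And>i. row i A = a i *s v"
    by metis
  moreover have "A$i$j = row i A $ j" for i j
    by (simp add: row_def)
  ultimately have "A$i$j = a i * v$j" for i j
    by simp
  then show thesis
    using that by blast
qed

lemma psd_factor_outer: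
  assumes "psd A" and factor: "\<And>i j. A$i$j = a i * b j"
  obtains x where "\<And>i j. A$i$j = x i * cnj (x j)"
proof (cases "\<exists>k. A$k$k \<noteq> 0")
  case True
  then obtain k where "A$k$k \<noteq> 0"
    by blast
  define r where "r = Re (A$k$k)"
  have Akk: "A$k$k = complex_of_real r"
    using psd_diag_real[OF assms(1)] by (simp add: r_def)
  then have "r \<noteq> 0"
    using \<open>A$k$k \<noteq> 0\<close> by auto
  then have "0 < r"
    using psd_diag_nonneg[OF assms(1), of k] by (simp add: r_def)
  have sqrt_r: "complex_of_real (sqrt r) * complex_of_real (sqrt r) = complex_of_real r"
    using \<open>0 < r\<close> by (simp flip: of_real_mult)
  define x where "x i = A$i$k / complex_of_real (sqrt r)" for i
  have "A$i$j = x i * cnj (x j)" for i j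
  proof -
    have "x i * cnj (x j) = A$i$k * cnj (A$j$k) / complex_of_real r"
      by (simp add: x_def sqrt_r)
    also have "\<dots> = A$i$k * A$k$j / A$k$k"
      using psd_hermitian[OF assms(1), of j k] Akk by simp
    also have "A$i$k * A$k$j = A$i$j * A$k$k"
      using factor by (simp add: mult_ac)
    finally show ?thesis
      using \<open>A$k$k \<noteq> 0\<close> by simp
  qed
  then show thesis
    using that by blast
next
  case False
  have "A$i$j = 0" for i j
  proof -
    have "A$i$j * cnj (A$i$j) = A$i$j * A$j$i"
      using psd_hermitian[OF assms(1), of i j] by simp
    also have "\<dots> = A$i$i * A$j$j"
      using factor by (simp add: mult_ac)
    finally have "A$i$j * cnj (A$i$j) = 0"
      using False by simp
    then show ?thesis
      by simp
  qed
  then show thesis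
    using that[of "\<lambda>_. 0"] by simp
qed

lemma norm_hadamard_outer_ge:
  assumes N: "unitarily_invariant_norm N" and A: "\<And>i j. A$i$j = x i * cnj (x j)"
  shows "(MIN i. (cmod (x i))^2) * N B \<le> N (A \<circ>\<^sub>H B)"
proof -
  define \<mu> where "\<mu> = (MIN i. (cmod (x i))^2)"
  have \<mu>_le: "\<mu> \<le> (cmod (x i))^2" for i
    unfolding \<mu>_def by (rule Min_le) auto
  have "\<mu> \<in> range (\<lambda>i. (cmod (x i))^2)"
    unfolding \<mu>_def by (rule Min_in) auto
  then have "0 \<le> \<mu>"
    by auto
  have norm: "is_matrix_norm N"
    using unitarily_invariant_normD(1)[OF N] .
  show ?thesis
  proof (cases "\<mu> = 0")
    case True
    then show ?thesis
      using is_matrix_normD(1)[OF norm] by (simp add: \<mu>_def)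
  next
    case False
    then have "x i \<noteq> 0" for i
      using \<mu>_le[of i] \<open>0 \<le> \<mu>\<close> by auto
    define c where "c i = complex_of_real (sqrt \<mu>) / x i" for i
    have "sqrt \<mu> \<le> cmod (x i)" for i
      using real_sqrt_le_mono[OF \<mu>_le[of i]] by simp
    then have "cmod (c i) \<le> 1" "cmod (cnj (c i)) \<le> 1" for i
      using \<open>0 \<le> \<mu>\<close> \<open>x i \<noteq> 0\<close> by (simp_all add: c_def norm_divide)
    then have "N (diag_scale c (\<lambda>j. cnj (c j)) (A \<circ>\<^sub>H B)) \<le> N (A \<circ>\<^sub>H B)"
      by (rule unitarily_invariant_norm_diag_scale_le[OF N])
    moreover have "diag_scale c (\<lambda>j. cnj (c j)) (A \<circ>\<^sub>H B) = \<mu> *\<^sub>R B"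
    proof -
      have "(\<lambda>i. c i * x i) = (\<lambda>_. complex_of_real (sqrt \<mu>))"
        and "(\<lambda>j. cnj (x j) * cnj (c j)) = (\<lambda>_. complex_of_real (sqrt \<mu>))"
        using \<open>\<And>i. x i \<noteq> 0\<close> by (simp_all add: c_def)
      then have "diag_scale c (\<lambda>j. cnj (c j)) (A \<circ>\<^sub>H B)
          = diag_scale (\<lambda>_. complex_of_real (sqrt \<mu>)) (\<lambda>_. complex_of_real (sqrt \<mu>)) B"
        by (simp add: hadamard_outer[OF A] diag_scale_diag_scale)
      also have "\<dots> = \<mu> *\<^sub>R B"
        using \<open>0 \<le> \<mu>\<close> by (simp add: diag_scale_def vec_eq_iff) (simp add: scaleR_conv_of_real flip: of_real_mult)
      finally show ?thesis .
    qed
    ultimately show ?thesis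
      using is_matrix_normD(3)[OF norm] \<open>0 \<le> \<mu>\<close> by (simp add: \<mu>_def)
  qed
qed

lemma exists_psd_hadamard_norm_eq_diag:
  assumes N: "is_matrix_norm N" and "A$k$k = complex_of_real r" "0 \<le> r"
  obtains B where "psd B" "N B = 1" "N (A \<circ>\<^sub>H B) = r"
proof -
  define E where "E = diag_mat (\<lambda>i. complex_of_real (indicator {k} i))"
  have "E$k$k = 1"
    by (simp add: E_def diag_mat_def)
  then have "E \<noteq> 0"
    by auto
  then have "0 < N E"
    using is_matrix_normD(1,2)[OF N] by (metis less_eq_real_def)
  define B where "B = diag_mat (\<lambda>i. complex_of_real (indicator {k} i / N E))"
  have "psd B"
    unfolding B_def using \<open>0 < N E\<close> by (intro psd_diag_mat) simp
  moreover have "B = (1 / N E) *\<^sub>R E"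
    unfolding B_def E_def scaleR_diag_mat by (simp add: scaleR_conv_of_real)
  then have "N B = 1"
    using is_matrix_normD(3)[OF N] \<open>0 < N E\<close> by simp
  moreover have "A \<circ>\<^sub>H B = r *\<^sub>R B"
    unfolding B_def hadamard_diag_mat scaleR_diag_mat using assms(2)
    by (intro arg_cong[where f = diag_mat] ext) (simp add: scaleR_conv_of_real indicator_def)
  then have "N (A \<circ>\<^sub>H B) = r"
    using is_matrix_normD(3)[OF N] \<open>N B = 1\<close> \<open>0 \<le> r\<close> by simp
  ultimately show thesis
    using that by blast
qed

lemma I_idx_eqI:
  assumes "psd B" "N B = 1" "N (A \<circ>\<^sub>H B) = m"
    and "\<And>B'. psd B' \<Longrightarrow> N B' = 1 \<Longrightarrow> m \<le> N (A \<circ>\<^sub>H B')"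
  shows "I_idx N A = m"
  unfolding I_idx_def using assms by (intro cInf_eq_minimum) blast+

theorem proposition5p2:
  fixes A :: "complex^'n^'n" and N :: "complex^'n^'n \<Rightarrow> real"
  assumes "psd A" and "rank A = 1" and "unitarily_invariant_norm N"
  shows "(\<exists>B. psd B \<and> N B = 1 \<and> N (A \<circ>\<^sub>H B) = I_idx N A)
         \<and> I_idx N A = (MIN i. Re (A $ i $ i))"
proof -
  obtain a v where "\<And>i j. A$i$j = a i * v$j"
    using rank_le_1_factor[of A] assms(2) by auto
  then obtain x where x: "\<And>i j. A$i$j = x i * cnj (x j)"
    using psd_factor_outer[OF assms(1)] by metis
  have diag: "Re (A$i$i) = (cmod (x i))^2" for i
    using x[of i i] by (simp flip: complex_norm_square)
  define \<mu> where "\<mu> = (MIN i. Re (A$i$i))"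
  have "\<mu> \<in> range (\<lambda>i. Re (A$i$i))"
    unfolding \<mu>_def by (rule Min_in) auto
  then obtain k where "A$k$k = complex_of_real \<mu>" "0 \<le> \<mu>"
    using psd_diag_real[OF assms(1)] psd_diag_nonneg[OF assms(1)] by auto
  then obtain B where B: "psd B" "N B = 1" "N (A \<circ>\<^sub>H B) = \<mu>"
    using exists_psd_hadamard_norm_eq_diag unitarily_invariant_normD(1)[OF assms(3)] by metis
  have "\<mu> \<le> N (A \<circ>\<^sub>H B')" if "N B' = 1" for B'
    using norm_hadamard_outer_ge[OF assms(3) x, of B'] that by (simp add: \<mu>_def diag)
  then have "I_idx N A = \<mu>"
    using I_idx_eqI[OF B] by blast
  then show ?thesis
    using B \<mu>_def by metis
qed

end
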